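(* Let $m$ be a positive integer. Every $2^m(2^{m+1}+1)^{m+2}$-$T_0T^\ast$-perfect number $n>1$ has the form $p_1^{2^{m+1}(2^{m+1}+1)^{m+2}-1}$ for a prime $p_1$, or the form $p_1\cdots p_{m+2}$ for distinct primes $p_1,\dots,p_{m+2}$.
   Context: For a positive integer $m'$, $T(m')$ denotes the product of all positive divisors of $m'$, and $T^\ast(m')$ the product of all unitary divisors of $m'$ (divisors $d$ with $\gcd(d,m'/d)=1$). For an integer $K\ge 2$, an integer $n>1$ is called $K$-$T_0T^\ast$-perfect if $T(T^\ast(n))=n^K$. *)

theory Defs
  imports "HOL-Computational_Algebra.Primes"
begin

definition divprod :: "nat \<Rightarrow> nat" where
  "divprod m = (\<Prod>d\<in>{d. d dvd m}. d)"

definition unitary_divprod :: "nat \<Rightarrow> nat" where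
  "unitary_divprod m = (\<Prod>d\<in>{d. d dvd m \<and> coprime d (m div d)}. d)"

text \<open>n > 1 is K-T0T*-perfect if T(T*(n)) = n^K.\<close>
definition K_T0Tstar_perfect :: "nat \<Rightarrow> nat \<Rightarrow> bool" where
  "K_T0Tstar_perfect K n \<longleftrightarrow> n > 1 \<and> divprod (unitary_divprod n) = n ^ K"

end

theory Submission
  imports Defs "HOL-Library.FuncSet" "HOL-Number_Theory.Totient"
begin

text \<open>
  Pairing each divisor d with its complement n div d gives T(n)^2 = n^\<tau>(n) and
  T*(n)^2 = n^\<tau>*(n). Since \<tau>*(n) = 2^s, where s is the number of distinct prime
  factors of n, we get T*(n) = n^(2^(s-1)); counting divisors by exponent vectors then
  turns T(T*(n)) = n^K into the equation
  2K = 2^(s-1) \<Prod>(2^(s-1) a(p) + 1), where a(p) are the exponents of n.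
  For K = 2^m c^(m+2) with c = 2^(m+1) + 1 odd, either s = 1, which fixes the exponent of
  the single prime, or s \<ge> 2, where the product is odd, so comparing powers of 2 forces
  s = m + 2; then each of the m + 2 factors is at least c while their product is
  c^(m+2), so all exponents are 1.
\<close>

lemma prod_square_eq_power_card:
  fixes m :: nat
  assumes "m > 0" "finite A" "\<And>d. d \<in> A \<Longrightarrow> d dvd m" "\<And>d. d \<in> A \<Longrightarrow> m div d \<in> A"
  shows "(\<Prod>A) ^ 2 = m ^ card A"
proof -
  have "(\<Prod>d\<in>A. m div d) = (\<Prod>d\<in>A. d)"
    by (rule prod.reindex_bij_witness[where i="\<lambda>d. m div d" and j="\<lambda>d. m div d"])
       (use assms in \<open>auto simp: div_div_eq_right\<close>)
  then have "(\<Prod>A) ^ 2 = (\<Prod>d\<in>A. d) * (\<Prod>d\<in>A. m div d)"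
    by (simp add: power2_eq_square)
  also have "\<dots> = (\<Prod>d\<in>A. d * (m div d))"
    by (simp add: prod.distrib)
  also have "\<dots> = (\<Prod>d\<in>A. m)"
    by (intro prod.cong) (auto dest: assms(3))
  finally show ?thesis
    by simp
qed

lemma divprod_square: "m > 0 \<Longrightarrow> divprod m ^ 2 = m ^ card {d. d dvd m}"
  unfolding divprod_def
  by (rule prod_square_eq_power_card) (auto simp: div_div_eq_right)

lemma unitary_divprod_square:
  "m > 0 \<Longrightarrow> unitary_divprod m ^ 2 = m ^ card {d. d dvd m \<and> coprime d (m div d)}"
  unfolding unitary_divprod_def
  by (rule prod_square_eq_power_card) (auto simp: div_div_eq_right coprime_commute)

text \<open>Divisors of N are counted through their exponent vectors, restricted to the prime
  factors of N so that the divisors correspond to the finite Pi-set of exponent bounds.\<close>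

definition exponent_vector :: "nat \<Rightarrow> nat \<Rightarrow> nat \<Rightarrow> nat" where
  "exponent_vector N d = restrict (\<lambda>p. multiplicity p d) (prime_factors N)"

lemma inj_on_exponent_vector:
  assumes "N > 0"
  shows "inj_on (exponent_vector N) {d. d dvd N}"
proof (rule inj_onI)
  fix x y
  assume x: "x \<in> {d. d dvd N}" and y: "y \<in> {d. d dvd N}"
    and eq: "exponent_vector N x = exponent_vector N y"
  have "x > 0" "y > 0"
    using x y assms by (auto intro!: gr0I)
  then show "x = y"
  proof (rule multiplicity_eq_nat)
    fix p :: nat
    assume p: "prime p"
    show "multiplicity p x = multiplicity p y"
    proof (cases "p \<in> prime_factors N")
      case True
      then show ?thesis
        using fun_cong[OF eq, of p] by (simp add: exponent_vector_def)
    next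
      case False
      then have "\<not> p dvd x" "\<not> p dvd y"
        using p x y assms dvd_trans by (auto intro: prime_factorsI)
      then show ?thesis
        by (simp add: not_dvd_imp_multiplicity_0)
    qed
  qed
qed

lemma
  assumes "N > 0" "f \<in> (\<Pi>\<^sub>E p\<in>prime_factors N. {0..multiplicity p N})"
  shows exponent_vector_prod_prime_powers:
      "exponent_vector N (\<Prod>p\<in>prime_factors N. p ^ f p) = f"
    and prod_prime_powers_dvd: "(\<Prod>p\<in>prime_factors N. p ^ f p) dvd N"
proof -
  show "exponent_vector N (\<Prod>p\<in>prime_factors N. p ^ f p) = f"
  proof
    fix q
    show "exponent_vector N (\<Prod>p\<in>prime_factors N. p ^ f p) q = f q"
    proof (cases "q \<in> prime_factors N")
      case True
      then have "multiplicity q (\<Prod>p\<in>prime_factors N. p ^ f p) = f q"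
        using multiplicity_prod_prime_powers[of "prime_factors N" q f] by auto
      with True show ?thesis
        by (simp add: exponent_vector_def)
    next
      case False
      then show ?thesis
        using PiE_arb[OF assms(2)] by (simp add: exponent_vector_def)
    qed
  qed
  have "(\<Prod>p\<in>prime_factors N. p ^ f p) dvd (\<Prod>p\<in>prime_factors N. p ^ multiplicity p N)"
    using PiE_mem[OF assms(2)] by (intro prod_dvd_prod le_imp_power_dvd) simp
  also have "\<dots> = N"
    using prod_prime_factors[of N] assms(1) by simp
  finally show "(\<Prod>p\<in>prime_factors N. p ^ f p) dvd N" .
qed

lemma card_eq_card_exponent_vectors:
  assumes "N > 0" "A \<subseteq> {d. d dvd N}"
    and "\<And>d. d dvd N \<Longrightarrow> d \<in> A \<longleftrightarrow> exponent_vector N d \<in> B"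
    and "B \<subseteq> (\<Pi>\<^sub>E p\<in>prime_factors N. {0..multiplicity p N})"
  shows "card A = card B"
proof -
  have "exponent_vector N ` A = B"
  proof
    show "exponent_vector N ` A \<subseteq> B"
      using assms(2,3) by auto
    show "B \<subseteq> exponent_vector N ` A"
    proof
      fix f
      assume "f \<in> B"
      then have f: "f \<in> (\<Pi>\<^sub>E p\<in>prime_factors N. {0..multiplicity p N})"
        using assms(4) by blast
      define d where "d = (\<Prod>p\<in>prime_factors N. p ^ f p)"
      have "f = exponent_vector N d"
        unfolding d_def using exponent_vector_prod_prime_powers[OF assms(1) f] by simp
      moreover have "d dvd N"
        unfolding d_def using prod_prime_powers_dvd[OF assms(1) f] .
      ultimately have "d \<in> A"
        using assms(3) \<open>f \<in> B\<close> by blast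
      with \<open>f = exponent_vector N d\<close> show "f \<in> exponent_vector N ` A"
        by blast
    qed
  qed
  moreover have "inj_on (exponent_vector N) A"
    using inj_on_subset[OF inj_on_exponent_vector[OF assms(1)] assms(2)] .
  ultimately show ?thesis
    using card_image by fastforce
qed

lemma card_divisors:
  fixes N :: nat
  assumes "N > 0"
  shows "card {d. d dvd N} = (\<Prod>p\<in>prime_factors N. multiplicity p N + 1)"
proof -
  have "card {d. d dvd N} = card (\<Pi>\<^sub>E p\<in>prime_factors N. {0..multiplicity p N})"
    using assms
    by (intro card_eq_card_exponent_vectors)
       (auto simp: exponent_vector_def intro!: dvd_imp_multiplicity_le)
  then show ?thesis
    by (simp add: card_PiE)
qed

lemma card_divisors_power:
  fixes n :: nat
  assumes "n > 0"
  shows "card {d. d dvd n ^ e} = (\<Prod>p\<in>prime_factors n. e * multiplicity p n + 1)"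
proof (cases "e = 0")
  case False
  have "multiplicity p (n ^ e) = e * multiplicity p n" if "p \<in> prime_factors n" for p
    using that assms
    by (intro prime_elem_multiplicity_power_distrib prime_imp_prime_elem) auto
  then show ?thesis
    using assms False by (simp add: card_divisors prime_factors_power)
qed simp

lemma coprime_div_iff_multiplicity:
  fixes n d :: nat
  assumes "n > 0" "d dvd n"
  shows "coprime d (n div d) \<longleftrightarrow>
         (\<forall>p\<in>prime_factors n. multiplicity p d \<in> {0, multiplicity p n})"
proof -
  define e where "e = n div d"
  have n_eq: "n = d * e"
    using assms(2) by (simp add: e_def)
  then have "d \<noteq> 0" "e \<noteq> 0"
    using assms(1) by auto
  have multiplicity_n: "multiplicity p n = multiplicity p d + multiplicity p e" if "prime p" for p
    using that \<open>d \<noteq> 0\<close> \<open>e \<noteq> 0\<close> n_eq by (simp add: prime_elem_multiplicity_mult_distrib)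
  have dvd_iff: "p dvd x \<longleftrightarrow> multiplicity p x > 0" if "prime p" "x \<noteq> 0" for p x :: nat
    using that by (simp add: prime_multiplicity_gt_zero_iff)
  show ?thesis
    unfolding e_def[symmetric]
  proof
    assume "coprime d e"
    show "\<forall>p\<in>prime_factors n. multiplicity p d \<in> {0, multiplicity p n}"
    proof
      fix p
      assume "p \<in> prime_factors n"
      then have p: "prime p"
        by auto
      have "\<not> (p dvd d \<and> p dvd e)"
        using \<open>coprime d e\<close> p coprime_common_divisor not_prime_unit by blast
      then show "multiplicity p d \<in> {0, multiplicity p n}"
        using dvd_iff[OF p \<open>d \<noteq> 0\<close>] dvd_iff[OF p \<open>e \<noteq> 0\<close>] multiplicity_n[OF p] by auto
    qed
  next
    assume exponents: "\<forall>p\<in>prime_factors n. multiplicity p d \<in> {0, multiplicity p n}"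
    show "coprime d e"
    proof (rule ccontr)
      assume "\<not> coprime d e"
      then obtain p where p: "prime p" "p dvd gcd d e"
        using prime_factor_nat coprime_iff_gcd_eq_1 by blast
      then have "p dvd d" "p dvd e"
        by auto
      then have "p \<in> prime_factors n"
        using p(1) assms(1) n_eq by (intro prime_factorsI) simp_all
      then have "multiplicity p d \<in> {0, multiplicity p d + multiplicity p e}"
        using exponents multiplicity_n[OF p(1)] by metis
      moreover have "multiplicity p d > 0" "multiplicity p e > 0"
        using dvd_iff[OF p(1) \<open>d \<noteq> 0\<close>] dvd_iff[OF p(1) \<open>e \<noteq> 0\<close>] \<open>p dvd d\<close> \<open>p dvd e\<close>
        by simp_all
      ultimately show False
        by auto
    qed
  qed
qed

lemma card_unitary_divisors:
  fixes n :: nat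
  assumes "n > 0"
  shows "card {d. d dvd n \<and> coprime d (n div d)} = 2 ^ card (prime_factors n)"
proof -
  have "card {d. d dvd n \<and> coprime d (n div d)} =
        card (\<Pi>\<^sub>E p\<in>prime_factors n. {0, multiplicity p n})"
  proof (rule card_eq_card_exponent_vectors[OF assms])
    fix d
    assume "d dvd n"
    moreover have "exponent_vector n d \<in> (\<Pi>\<^sub>E p\<in>prime_factors n. {0, multiplicity p n}) \<longleftrightarrow>
                   (\<forall>p\<in>prime_factors n. multiplicity p d \<in> {0, multiplicity p n})"
      unfolding exponent_vector_def by (rule restrict_PiE_iff)
    ultimately show "d \<in> {d. d dvd n \<and> coprime d (n div d)} \<longleftrightarrow>
               exponent_vector n d \<in> (\<Pi>\<^sub>E p\<in>prime_factors n. {0, multiplicity p n})"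
      using coprime_div_iff_multiplicity[OF assms] by simp
  next
    show "(\<Pi>\<^sub>E p\<in>prime_factors n. {0, multiplicity p n}) \<subseteq>
          (\<Pi>\<^sub>E p\<in>prime_factors n. {0..multiplicity p n})"
      by (rule PiE_mono) auto
  qed auto
  also have "\<dots> = (\<Prod>p\<in>prime_factors n. card {0, multiplicity p n})"
    by (rule card_PiE) simp
  also have "\<dots> = (\<Prod>p\<in>prime_factors n. 2)"
    by (intro prod.cong) (auto simp: prime_factors_multiplicity)
  finally show ?thesis
    by simp
qed

lemma unitary_divprod_eq_power:
  fixes n :: nat
  assumes "n > 1"
  shows "unitary_divprod n = n ^ 2 ^ (card (prime_factors n) - 1)"
proof -
  have "prime_factors n \<noteq> {}"
    using assms by (simp add: prime_factorization_empty_iff)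
  then have "(2::nat) ^ card (prime_factors n) = 2 ^ (card (prime_factors n) - 1) * 2"
    by (simp add: card_gt_0_iff power_eq_if)
  then have "unitary_divprod n ^ 2 = (n ^ 2 ^ (card (prime_factors n) - 1)) ^ 2"
    using assms by (simp add: unitary_divprod_square card_unitary_divisors power_mult)
  then show ?thesis
    by (simp add: power_eq_iff_eq_base)
qed

lemma divprod_power_eq_power_iff:
  fixes n e K :: nat
  assumes "n > 1"
  shows "divprod (n ^ e) = n ^ K \<longleftrightarrow>
         2 * K = e * (\<Prod>p\<in>prime_factors n. e * multiplicity p n + 1)"
proof -
  have "divprod (n ^ e) = n ^ K \<longleftrightarrow> divprod (n ^ e) ^ 2 = (n ^ K) ^ 2"
    by (simp add: power_eq_iff_eq_base)
  also have "\<dots> \<longleftrightarrow> n ^ (e * (\<Prod>p\<in>prime_factors n. e * multiplicity p n + 1)) = n ^ (2 * K)"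
    using assms by (simp add: divprod_square card_divisors_power power_mult mult.commute)
  also have "\<dots> \<longleftrightarrow> 2 * K = e * (\<Prod>p\<in>prime_factors n. e * multiplicity p n + 1)"
    using assms by auto
  finally show ?thesis .
qed

lemma K_T0Tstar_perfect_iff:
  "K_T0Tstar_perfect K n \<longleftrightarrow> n > 1 \<and>
     2 * K = 2 ^ (card (prime_factors n) - 1) *
       (\<Prod>p\<in>prime_factors n. 2 ^ (card (prime_factors n) - 1) * multiplicity p n + 1)"
  by (auto simp: K_T0Tstar_perfect_def unitary_divprod_eq_power divprod_power_eq_power_iff)

lemma power2_mult_odd_eq_imp_eq:
  fixes a b i j :: nat
  assumes "odd a" "odd b" "2 ^ i * a = 2 ^ j * b"
  shows "i = j"
proof -
  have "multiplicity 2 (2 ^ k * c) = k" if "odd c" for k c :: nat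
    using that
    by (simp add: prime_elem_multiplicity_mult_distrib multiplicity_same_power
                  not_dvd_imp_multiplicity_0 odd_pos)
  then show ?thesis
    using assms by metis
qed

lemma prod_linear_eq_power_imp_eq_one:
  fixes b :: nat and a :: "'a \<Rightarrow> nat"
  assumes "finite P" "\<And>p. p \<in> P \<Longrightarrow> a p > 0"
    and "(\<Prod>p\<in>P. b * a p + 1) = (b + 1) ^ card P"
    and "b > 0" "q \<in> P"
  shows "a q = 1"
proof (rule ccontr)
  assume "a q \<noteq> 1"
  with assms have "b + 1 < b * a q + 1"
    by (metis One_nat_def Suc_lessI add_less_mono1 mult_less_cancel1 nat_mult_1_right)
  moreover have "b \<le> b * a p" if "p \<in> P" for p
    using assms(2)[OF that] by simp
  ultimately have "(\<Prod>p\<in>P. b + 1) < (\<Prod>p\<in>P. b * a p + 1)"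
    using assms(1,5) by (intro prod_mono_strict) auto
  with assms(3) show False
    by simp
qed

theorem mainTheorem13:
  fixes m n :: nat
  assumes "m \<ge> 1"
    and "K_T0Tstar_perfect (2^m * (2^(m+1) + 1)^(m+2)) n"
  shows "(\<exists>p. prime p \<and> n = p ^ (2^(m+1) * (2^(m+1) + 1)^(m+2) - 1))
       \<or> (\<exists>P. finite P \<and> card P = m + 2 \<and> (\<forall>p\<in>P. prime p) \<and> n = \<Prod>P)"
proof -
  define c :: nat where "c = 2 ^ (m + 1) + 1"
  define P where "P = prime_factors n"
  define t where "t = card P - 1"
  define a where "a p = multiplicity p n" for p
  have "n > 1" and key: "2 ^ (m + 1) * c ^ (m + 2) = 2 ^ t * (\<Prod>p\<in>P. 2 ^ t * a p + 1)"
    using assms(2) unfolding K_T0Tstar_perfect_iff c_def P_def t_def a_def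
    by (simp_all add: mult.assoc)
  have n_eq: "n = (\<Prod>p\<in>P. p ^ a p)"
    using prod_prime_factors[of n] \<open>n > 1\<close> unfolding P_def a_def by simp
  have "finite P" "P \<noteq> {}"
    using \<open>n > 1\<close> by (simp_all add: P_def prime_factorization_empty_iff)
  then consider "card P = 1" | "card P \<ge> 2"
    by (metis One_nat_def card_0_eq less_2_cases not_less)
  then show ?thesis
  proof cases
    case 1
    then obtain p where "P = {p}"
      by (rule card_1_singletonE)
    with key 1 have "a p = 2 ^ (m + 1) * c ^ (m + 2) - 1"
      by (simp add: t_def)
    moreover have "prime p"
      using \<open>P = {p}\<close> unfolding P_def by (metis in_prime_factors_imp_prime insertI1)
    ultimately show ?thesis
      using n_eq \<open>P = {p}\<close> unfolding c_def by auto
  next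
    case 2
    then have "odd (\<Prod>p\<in>P. 2 ^ t * a p + 1)" "odd (c ^ (m + 2))"
      using \<open>finite P\<close> by (simp_all add: t_def c_def even_prod_iff)
    with key have "t = m + 1"
      by (metis power2_mult_odd_eq_imp_eq)
    with 2 have "card P = m + 2"
      by (simp add: t_def)
    from key \<open>t = m + 1\<close> have "(\<Prod>p\<in>P. 2 ^ (m + 1) * a p + 1) = c ^ (m + 2)"
      by simp
    then have "(\<Prod>p\<in>P. 2 ^ (m + 1) * a p + 1) = (2 ^ (m + 1) + 1) ^ card P"
      unfolding \<open>card P = m + 2\<close> c_def .
    moreover have "a p > 0" if "p \<in> P" for p
      using that by (simp add: P_def a_def prime_factors_multiplicity)
    ultimately have "a p = 1" if "p \<in> P" for p
      using prod_linear_eq_power_imp_eq_one[of P a "2 ^ (m + 1)" p] \<open>finite P\<close> that by simp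
    then have "n = \<Prod>P"
      unfolding n_eq by simp
    then show ?thesis
      using \<open>finite P\<close> \<open>card P = m + 2\<close> by (auto simp: P_def)
  qed
qed

end
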